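(* Let $G$ be a simple graph and $v_0\in V(G)$ with $N_G(v_0)=\{u_1,u_2\}$ ($u_1\ne u_2$). (i) Suppose $u_1u_2\in E(G)$, let $G'=G-u_1u_2-v_0$ and $g\in\mathrm{SEDF}^0(G')$. Define $f:E(G)\to\{1,-1\}$ by $f(e)=g(e)$ for $e\in E(G')$, $f(v_0u_i)=1$ for $i=1,2$, and $f(u_1u_2)=-1$. Then $f\in\mathrm{SEDF}^0(G)$ and $f(G)=g(G')+1$. (ii) Suppose $u_1u_2\notin E(G)$, let $G'=G+u_1u_2-v_0$ and $g\in\mathrm{SEDF}^0(G')$. Define $f:E(G)\to\{1,-1\}$ by $f(e)=g(e)$ for $e\in E(G')\setminus\{u_1u_2\}$, $f(u_1v_0)=1$, and $f(u_2v_0)=g(u_1u_2)$. Then $f\in\mathrm{SEDF}^0(G)$ and $f(G)=g(G')+1$.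
   Context: For a graph $H$ and $f:E(H)\to\{1,-1\}$, $f(H)=\sum_{e\in E(H)}f(e)$ and $f(v)=\sum_{e\in E_H(v)}f(e)$, where $E_H(v)$ is the set of edges of $H$ incident with $v$. $\mathrm{SEDF}^0(H)$ is the set of functions $f:E(H)\to\{1,-1\}$ such that (a) $f(v)\ge 0$ for all $v\in V(H)$, and (b) $f(u)+f(v)\ge 2$ for every edge $uv$ with $f(uv)=1$. $G-u_1u_2-v_0$ is obtained by deleting the edge $u_1u_2$ and the vertex $v_0$; $G+u_1u_2-v_0$ by adding the edge $u_1u_2$ and deleting $v_0$. *)

theory Defs
  imports Main
begin

definition simple_graph :: "'a set \<Rightarrow> 'a set set \<Rightarrow> bool" where
  "simple_graph V E \<longleftrightarrow> finite V \<and>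
     (\<forall>e\<in>E. \<exists>u v. u \<in> V \<and> v \<in> V \<and> u \<noteq> v \<and> e = {u, v})"

definition incident :: "'a set set \<Rightarrow> 'a \<Rightarrow> 'a set set" where
  "incident E v = {e \<in> E. v \<in> e}"

definition neighbors :: "'a set set \<Rightarrow> 'a \<Rightarrow> 'a set" where
  "neighbors E v = {u. {v, u} \<in> E}"

definition fsum :: "('a set \<Rightarrow> int) \<Rightarrow> 'a set set \<Rightarrow> int" where
  "fsum f E = (\<Sum>e\<in>E. f e)"

definition fvert :: "('a set \<Rightarrow> int) \<Rightarrow> 'a set set \<Rightarrow> 'a \<Rightarrow> int" where
  "fvert f E v = (\<Sum>e\<in>incident E v. f e)"

text \<open>SEDF^0(H) for H = (V,E); functions are total on edge-sets, only values on E matter.\<close>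
definition SEDF0 :: "'a set \<Rightarrow> 'a set set \<Rightarrow> ('a set \<Rightarrow> int) set" where
  "SEDF0 V E = {f. (\<forall>e\<in>E. f e = 1 \<or> f e = -1)
                  \<and> (\<forall>v\<in>V. fvert f E v \<ge> 0)
                  \<and> (\<forall>u v. {u, v} \<in> E \<and> f {u, v} = 1 \<longrightarrow> fvert f E u + fvert f E v \<ge> 2)}"

end

theory Submission
  imports Defs
begin

text \<open>
  In case (i) \<open>G\<close> arises from \<open>G'\<close> by erecting a triangle \<open>u\<^sub>1v\<^sub>0u\<^sub>2\<close> on the edge
  \<open>u\<^sub>1u\<^sub>2\<close>; in case (ii) by subdividing the new edge \<open>u\<^sub>1u\<^sub>2\<close> with \<open>v\<^sub>0\<close>.
  Only the signed degrees at \<open>v\<^sub>0\<close>, \<open>u\<^sub>1\<close>, \<open>u\<^sub>2\<close> change. In case (i) the values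
  \<open>1, 1, -1\<close> on the triangle cancel at \<open>u\<^sub>1\<close> and \<open>u\<^sub>2\<close>, so \<open>f\<close> has the signed degrees
  of \<open>g\<close> away from \<open>v\<^sub>0\<close>, and \<open>f(v\<^sub>0) = 2\<close>. In case (ii), with \<open>c = g(u\<^sub>1u\<^sub>2)\<close>, the
  signed degree at \<open>u\<^sub>1\<close> grows by \<open>1 - c \<ge> 0\<close>, the one at \<open>u\<^sub>2\<close> is unchanged and
  \<open>f(v\<^sub>0) = 1 + c\<close>, so every edge \<open>v\<^sub>0u\<^sub>i\<close> of value 1 has endpoint sum at least 2.
\<close>

lemma simple_graph_finite_edges:
  assumes "simple_graph V E"
  shows "finite E"
proof -
  have "E \<subseteq> Pow V" "finite V" using assms by (auto simp: simple_graph_def)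
  then show ?thesis by (meson finite_Pow_iff finite_subset)
qed

lemma simple_graph_edgeD:
  assumes "simple_graph V E" and "{u, v} \<in> E"
  shows "u \<in> V" "v \<in> V" "u \<noteq> v"
  using assms by (auto simp: simple_graph_def doubleton_eq_iff)

lemma incident_eq_image_neighbors:
  assumes "simple_graph V E"
  shows "incident E v = (\<lambda>u. {v, u}) ` neighbors E v"
proof
  show "incident E v \<subseteq> (\<lambda>u. {v, u}) ` neighbors E v"
  proof
    fix e assume "e \<in> incident E v"
    then obtain a b where "e = {a, b}" "e \<in> E" "v \<in> e"
      using assms by (auto simp: incident_def simple_graph_def)
    then obtain u where "e = {v, u}" by blast
    with \<open>e \<in> E\<close> show "e \<in> (\<lambda>u. {v, u}) ` neighbors E v"
      by (auto simp: neighbors_def)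
  qed
qed (auto simp: incident_def neighbors_def)

lemma degree_two_vertexD:
  assumes "simple_graph V E" and "neighbors E v0 = {u1, u2}"
  shows "incident E v0 = {{v0, u1}, {v0, u2}}" and "{v0, u1} \<in> E" "{v0, u2} \<in> E"
    and "u1 \<in> V" "u2 \<in> V" "v0 \<noteq> u1" "v0 \<noteq> u2"
proof -
  show "incident E v0 = {{v0, u1}, {v0, u2}}"
    using incident_eq_image_neighbors[OF assms(1)] assms(2) by simp
  show e1: "{v0, u1} \<in> E" and e2: "{v0, u2} \<in> E"
    using assms(2) by (auto simp: neighbors_def)
  show "u1 \<in> V" "u2 \<in> V" "v0 \<noteq> u1" "v0 \<noteq> u2"
    using simple_graph_edgeD[OF assms(1) e1] simple_graph_edgeD[OF assms(1) e2] by auto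
qed

lemma fvert_insert:
  assumes "finite A" "e \<notin> A"
  shows "fvert f (insert e A) w = (if w \<in> e then f e else 0) + fvert f A w"
proof -
  have "incident (insert e A) w = (if w \<in> e then insert e (incident A w) else incident A w)"
    by (auto simp: incident_def)
  moreover have "finite (incident A w)" "e \<notin> incident A w"
    using assms by (auto simp: incident_def)
  ultimately show ?thesis by (simp add: fvert_def)
qed

lemma fvert_cong:
  assumes "\<forall>e\<in>A. f e = g e"
  shows "fvert f A w = fvert g A w"
  using assms unfolding fvert_def incident_def by (intro sum.cong) auto

lemma fvert_eq_0_if_not_incident:
  assumes "\<forall>e\<in>A. w \<notin> e"
  shows "fvert f A w = 0"
proof -
  have "incident A w = {}" using assms by (auto simp: incident_def)
  then show ?thesis by (simp add: fvert_def)
qed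

lemma fsum_insert:
  assumes "finite A" "e \<notin> A"
  shows "fsum f (insert e A) = f e + fsum f A"
  using assms by (simp add: fsum_def)

lemma fsum_cong:
  assumes "\<forall>e\<in>A. f e = g e"
  shows "fsum f A = fsum g A"
  using assms unfolding fsum_def by (intro sum.cong) auto

lemma SEDF0D:
  assumes "f \<in> SEDF0 V E"
  shows "\<And>e. e \<in> E \<Longrightarrow> f e = 1 \<or> f e = -1"
    and "\<And>v. v \<in> V \<Longrightarrow> fvert f E v \<ge> 0"
    and "\<And>u v. {u, v} \<in> E \<Longrightarrow> f {u, v} = 1 \<Longrightarrow> fvert f E u + fvert f E v \<ge> 2"
  using assms by (auto simp: SEDF0_def)

context
  fixes E0 :: "'a set set" and v0 u1 u2 :: 'a
  assumes finite_E0: "finite E0"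
    and v0_uncovered: "\<forall>e\<in>E0. v0 \<notin> e"
    and u12_notin: "{u1, u2} \<notin> E0"
    and distinct_vertices: "u1 \<noteq> u2" "v0 \<noteq> u1" "v0 \<noteq> u2"
begin

lemma new_edges_notin:
  shows "{v0, u2} \<notin> E0" "{v0, u1} \<notin> insert {v0, u2} E0"
    "{u1, u2} \<notin> insert {v0, u1} (insert {v0, u2} E0)"
  using v0_uncovered u12_notin distinct_vertices by (auto simp: doubleton_eq_iff)

lemma fvert_triangle_extension:
  assumes "\<forall>e\<in>E0. f e = g e"
    and "f {v0, u1} = 1" "f {v0, u2} = 1" "f {u1, u2} = -1"
  shows "fvert f (insert {u1, u2} (insert {v0, u1} (insert {v0, u2} E0))) w
           = (if w = v0 then 2 else fvert g E0 w)"
proof -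
  have "fvert f (insert {u1, u2} (insert {v0, u1} (insert {v0, u2} E0))) w
      = (if w \<in> {u1, u2} then -1 else 0) + (if w \<in> {v0, u1} then 1 else 0)
        + (if w \<in> {v0, u2} then 1 else 0) + fvert g E0 w"
    using assms finite_E0 new_edges_notin
    by (simp add: fvert_insert fvert_cong[OF assms(1)] del: insert_iff)
  moreover have "fvert g E0 v0 = 0"
    using v0_uncovered by (rule fvert_eq_0_if_not_incident)
  ultimately show ?thesis using distinct_vertices by auto
qed

lemma SEDF0_triangle_extension:
  assumes g: "g \<in> SEDF0 (V - {v0}) E0" and "u1 \<in> V" "u2 \<in> V"
    and fg: "\<forall>e\<in>E0. f e = g e"
    and f: "f {v0, u1} = 1" "f {v0, u2} = 1" "f {u1, u2} = -1"
  defines "E \<equiv> insert {u1, u2} (insert {v0, u1} (insert {v0, u2} E0))"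
  shows "f \<in> SEDF0 V E" and "fsum f E = fsum g E0 + 1"
proof -
  have fv: "\<And>w. fvert f E w = (if w = v0 then 2 else fvert g E0 w)"
    unfolding E_def using fg f by (rule fvert_triangle_extension)
  have fv_nonneg: "fvert f E w \<ge> 0" if "w \<in> V" for w
    using fv SEDF0D(2)[OF g] that by (cases "w = v0") auto
  show "f \<in> SEDF0 V E"
    unfolding SEDF0_def
  proof (intro CollectI conjI ballI allI impI)
    fix e assume "e \<in> E"
    then consider "e \<in> E0" | "e \<in> {{u1, u2}, {v0, u1}, {v0, u2}}" unfolding E_def by blast
    then show "f e = 1 \<or> f e = -1"
      by cases (use fg f SEDF0D(1)[OF g, of e] in auto)
  next
    fix v assume "v \<in> V" then show "fvert f E v \<ge> 0" by (rule fv_nonneg)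
  next
    fix u v assume uv: "{u, v} \<in> E \<and> f {u, v} = 1"
    then have "{u, v} \<noteq> {u1, u2}" using f by auto
    with uv consider "{u, v} = {v0, u1}" | "{u, v} = {v0, u2}" | "{u, v} \<in> E0"
      unfolding E_def by blast
    then show "fvert f E u + fvert f E v \<ge> 2"
    proof cases
      case 1
      then have "fvert f E u + fvert f E v = fvert f E v0 + fvert f E u1"
        by (auto simp: doubleton_eq_iff)
      then show ?thesis using fv[of v0] fv_nonneg[OF \<open>u1 \<in> V\<close>] by simp
    next
      case 2
      then have "fvert f E u + fvert f E v = fvert f E v0 + fvert f E u2"
        by (auto simp: doubleton_eq_iff)
      then show ?thesis using fv[of v0] fv_nonneg[OF \<open>u2 \<in> V\<close>] by simp
    next
      case 3
      then have "u \<noteq> v0" "v \<noteq> v0" using v0_uncovered by auto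
      with 3 uv fg show ?thesis using fv SEDF0D(3)[OF g] by auto
    qed
  qed
  show "fsum f E = fsum g E0 + 1"
    unfolding E_def using finite_E0 new_edges_notin f
    by (simp add: fsum_insert fsum_cong[OF fg] del: insert_iff)
qed

lemma fvert_subdivision:
  assumes "\<forall>e\<in>E0. f e = g e"
    and "f {v0, u1} = 1" "f {v0, u2} = g {u1, u2}"
  shows "fvert f (insert {v0, u1} (insert {v0, u2} E0)) w
           = (if w = v0 then 1 + g {u1, u2}
              else fvert g (insert {u1, u2} E0) w + (if w = u1 then 1 - g {u1, u2} else 0))"
proof -
  have "fvert f (insert {v0, u1} (insert {v0, u2} E0)) w
      = (if w \<in> {v0, u1} then 1 else 0) + (if w \<in> {v0, u2} then g {u1, u2} else 0)
        + fvert g E0 w"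
    using assms finite_E0 new_edges_notin
    by (simp add: fvert_insert fvert_cong[OF assms(1)] del: insert_iff)
  moreover have "fvert g (insert {u1, u2} E0) w
      = (if w \<in> {u1, u2} then g {u1, u2} else 0) + fvert g E0 w"
    using finite_E0 u12_notin by (simp add: fvert_insert del: insert_iff)
  moreover have "fvert g E0 v0 = 0"
    using v0_uncovered by (rule fvert_eq_0_if_not_incident)
  ultimately show ?thesis using distinct_vertices by auto
qed

lemma SEDF0_subdivision:
  assumes g: "g \<in> SEDF0 (V - {v0}) (insert {u1, u2} E0)" and "u1 \<in> V" "u2 \<in> V"
    and fg: "\<forall>e\<in>E0. f e = g e"
    and f: "f {v0, u1} = 1" "f {v0, u2} = g {u1, u2}"
  defines "E \<equiv> insert {v0, u1} (insert {v0, u2} E0)"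
    and "E' \<equiv> insert {u1, u2} E0"
  shows "f \<in> SEDF0 V E" and "fsum f E = fsum g E' + 1"
proof -
  define c where "c = g {u1, u2}"
  have c: "c = 1 \<or> c = -1" using SEDF0D(1)[OF g] by (simp add: c_def)
  have fv: "\<And>w. fvert f E w
      = (if w = v0 then 1 + c else fvert g E' w + (if w = u1 then 1 - c else 0))"
    unfolding E_def E'_def c_def using fg f by (rule fvert_subdivision)
  have fv_ge: "fvert f E w \<ge> fvert g E' w" if "w \<noteq> v0" for w
    using fv c that by auto
  have gv_nonneg: "fvert g E' w \<ge> 0" if "w \<in> V" "w \<noteq> v0" for w
    using SEDF0D(2)[OF g] that by (simp add: E'_def)
  show "f \<in> SEDF0 V E"
    unfolding SEDF0_def
  proof (intro CollectI conjI ballI allI impI)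
    fix e assume "e \<in> E"
    then consider "e \<in> E0" | "e = {v0, u1}" | "e = {v0, u2}" unfolding E_def by blast
    then show "f e = 1 \<or> f e = -1"
      by cases (use fg f c SEDF0D(1)[OF g, of e] in \<open>auto simp: c_def\<close>)
  next
    fix v assume "v \<in> V"
    show "fvert f E v \<ge> 0"
    proof (cases "v = v0")
      case True
      then show ?thesis using fv c by auto
    next
      case False
      then show ?thesis using fv_ge[OF False] gv_nonneg[OF \<open>v \<in> V\<close> False] by linarith
    qed
  next
    fix u v assume uv: "{u, v} \<in> E \<and> f {u, v} = 1"
    then consider "{u, v} = {v0, u1}" | "{u, v} = {v0, u2}" | "{u, v} \<in> E0"
      unfolding E_def by blast
    then show "fvert f E u + fvert f E v \<ge> 2"
    proof cases
      case 1
      then have "fvert f E u + fvert f E v = fvert f E v0 + fvert f E u1"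
        by (auto simp: doubleton_eq_iff)
      then show ?thesis using fv[of v0] fv[of u1] gv_nonneg[OF \<open>u1 \<in> V\<close>] distinct_vertices by simp
    next
      case 2
      then have "c = 1" using uv f by (simp add: c_def)
      from 2 have "fvert f E u + fvert f E v = fvert f E v0 + fvert f E u2"
        by (auto simp: doubleton_eq_iff)
      then show ?thesis
        using \<open>c = 1\<close> fv[of v0] fv[of u2] gv_nonneg[OF \<open>u2 \<in> V\<close>] distinct_vertices by simp
    next
      case 3
      then have "u \<noteq> v0" "v \<noteq> v0" using v0_uncovered by auto
      moreover have "fvert g E' u + fvert g E' v \<ge> 2"
        using 3 uv fg SEDF0D(3)[OF g] by (simp add: E'_def)
      ultimately show ?thesis using fv_ge[of u] fv_ge[of v] by linarith
    qed
  qed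
  show "fsum f E = fsum g E' + 1"
    unfolding E_def E'_def using finite_E0 new_edges_notin u12_notin f
    by (simp add: fsum_insert fsum_cong[OF fg] del: insert_iff)
qed

end

theorem lemma2p3:
  fixes V :: "'a set" and E :: "'a set set" and v0 u1 u2 :: 'a
  assumes "simple_graph V E" and "v0 \<in> V"
    and "neighbors E v0 = {u1, u2}" and "u1 \<noteq> u2"
  shows
   "({u1, u2} \<in> E \<longrightarrow>
      (\<forall>g f. g \<in> SEDF0 (V - {v0}) (E - {{u1, u2}} - incident E v0)
         \<and> (\<forall>e \<in> E - {{u1, u2}} - incident E v0. f e = g e)
         \<and> f {v0, u1} = 1 \<and> f {v0, u2} = 1 \<and> f {u1, u2} = -1
       \<longrightarrow> f \<in> SEDF0 V E
           \<and> fsum f E = fsum g (E - {{u1, u2}} - incident E v0) + 1))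
    \<and>
    ({u1, u2} \<notin> E \<longrightarrow>
      (\<forall>g f. g \<in> SEDF0 (V - {v0}) (insert {u1, u2} (E - incident E v0))
         \<and> (\<forall>e \<in> E - incident E v0. f e = g e)
         \<and> f {u1, v0} = 1 \<and> f {u2, v0} = g {u1, u2}
       \<longrightarrow> f \<in> SEDF0 V E
           \<and> fsum f E = fsum g (insert {u1, u2} (E - incident E v0)) + 1))"
proof -
  note degree_two = degree_two_vertexD[OF assms(1,3)]
  have "finite E" using assms(1) by (rule simple_graph_finite_edges)
  show ?thesis
  proof (intro conjI; intro impI allI; elim conjE)
    fix g f
    let ?E0 = "E - {{u1, u2}} - incident E v0"
    assume "{u1, u2} \<in> E" "g \<in> SEDF0 (V - {v0}) ?E0" "\<forall>e \<in> ?E0. f e = g e"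
      "f {v0, u1} = 1" "f {v0, u2} = 1" "f {u1, u2} = -1"
    moreover have "E = insert {u1, u2} (insert {v0, u1} (insert {v0, u2} ?E0))"
      using \<open>{u1, u2} \<in> E\<close> degree_two(1-3) by auto
    moreover have "finite ?E0" "\<forall>e \<in> ?E0. v0 \<notin> e" "{u1, u2} \<notin> ?E0"
      using \<open>finite E\<close> by (auto simp: incident_def)
    ultimately show "f \<in> SEDF0 V E \<and> fsum f E = fsum g ?E0 + 1"
      using SEDF0_triangle_extension[of ?E0 v0 u1 u2 g V f] degree_two(4-) assms(4) by simp
  next
    fix g f
    let ?E0 = "E - incident E v0"
    assume "{u1, u2} \<notin> E" "g \<in> SEDF0 (V - {v0}) (insert {u1, u2} ?E0)"
      "\<forall>e \<in> ?E0. f e = g e" "f {u1, v0} = 1" "f {u2, v0} = g {u1, u2}"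
    moreover have "E = insert {v0, u1} (insert {v0, u2} ?E0)"
      using degree_two(1-3) by auto
    moreover have "finite ?E0" "\<forall>e \<in> ?E0. v0 \<notin> e" "{u1, u2} \<notin> ?E0"
      using \<open>finite E\<close> \<open>{u1, u2} \<notin> E\<close> by (auto simp: incident_def)
    ultimately show "f \<in> SEDF0 V E \<and> fsum f E = fsum g (insert {u1, u2} ?E0) + 1"
      using SEDF0_subdivision[of ?E0 v0 u1 u2 g V f] degree_two(4-) assms(4)
      by (simp add: insert_commute)
  qed
qed

end
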